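(* For every real number $\theta\in(0,1/4]\cup(3/11,2/7]$ there exists a finite simple graph $G$ such that $P^{J(\theta)}(G)\neq G$ and $P^{J(\theta)}\big(P^{J(\theta)}(G)\big)=G$.
   Context: All graphs are finite and simple. For a vertex $v$ of a graph $G$, $N[v]$ denotes its closed neighbourhood in $G$ (the set of neighbours of $v$ together with $v$). The Jaccard similarity of vertices $u,v$ in $G$ is $J_G(u,v)=|N[u]\cap N[v]|/|N[u]\cup N[v]|$. For a real threshold $\theta$, $P^{J(\theta)}(G)$ (the $\theta$-Jaccard polishing of $G$) is the graph on the same vertex set as $G$ in which two distinct vertices $u,v$ are adjacent if and only if $J_G(u,v)\ge\theta$. Equality of graphs means equality of edge sets on the same vertex set. *)

theory Defs
  imports Complex_Main
begin

definition simple_graph :: "'a set \<Rightarrow> 'a set set \<Rightarrow> bool" where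
  "simple_graph V E \<longleftrightarrow> finite V \<and> (\<forall>e\<in>E. \<exists>u v. u \<in> V \<and> v \<in> V \<and> u \<noteq> v \<and> e = {u, v})"

definition closed_nbhd :: "'a set \<Rightarrow> 'a set set \<Rightarrow> 'a \<Rightarrow> 'a set" where
  "closed_nbhd V E v = insert v {u \<in> V. {u, v} \<in> E}"

definition jaccard :: "'a set \<Rightarrow> 'a set set \<Rightarrow> 'a \<Rightarrow> 'a \<Rightarrow> real" where
  "jaccard V E u v =
     real (card (closed_nbhd V E u \<inter> closed_nbhd V E v)) /
     real (card (closed_nbhd V E u \<union> closed_nbhd V E v))"

definition jaccard_polish :: "real \<Rightarrow> 'a set \<Rightarrow> 'a set set \<Rightarrow> 'a set set" where
  "jaccard_polish \<theta> V E =
     {{u, v} | u v. u \<in> V \<and> v \<in> V \<and> u \<noteq> v \<and> jaccard V E u v \<ge> \<theta>}"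

end

theory Submission
  imports Defs
begin

text \<open>Blow up a 7-vertex pattern graph by replacing every vertex with a clique and every edge
  with a complete bipartite graph. Jaccard similarities in the blow-up depend only on the classes
  of the two vertices and are weighted Jaccard similarities of the pattern, the weights being
  the class sizes. For suitable class sizes, thresholding these at \<theta> turns the pattern G into
  the pattern H obtained from G by exchanging its two classes of size one, and for the same
  reason turns H back into G.\<close>

definition blowup_edges :: "'a set \<Rightarrow> ('a \<Rightarrow> 'c) \<Rightarrow> ('c \<Rightarrow> 'c set) \<Rightarrow> 'a set set" where
  "blowup_edges V cls N = {{u, v} | u v. u \<in> V \<and> v \<in> V \<and> u \<noteq> v \<and> cls v \<in> N (cls u)}"

definition closed_nbhd_system :: "'c set \<Rightarrow> ('c \<Rightarrow> 'c set) \<Rightarrow> bool" where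
  "closed_nbhd_system C N \<longleftrightarrow>
     (\<forall>i\<in>C. i \<in> N i \<and> N i \<subseteq> C) \<and> (\<forall>i\<in>C. \<forall>j\<in>C. j \<in> N i \<longleftrightarrow> i \<in> N j)"

definition class_size :: "'a set \<Rightarrow> ('a \<Rightarrow> 'c) \<Rightarrow> 'c \<Rightarrow> nat" where
  "class_size V cls c = card {x \<in> V. cls x = c}"

definition weighted_jaccard :: "('c \<Rightarrow> nat) \<Rightarrow> ('c \<Rightarrow> 'c set) \<Rightarrow> 'c \<Rightarrow> 'c \<Rightarrow> real" where
  "weighted_jaccard w N i j = real (sum w (N i \<inter> N j)) / real (sum w (N i \<union> N j))"

lemma simple_graph_blowup_edges: "finite V \<Longrightarrow> simple_graph V (blowup_edges V cls N)"
  unfolding simple_graph_def blowup_edges_def by blast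

lemma doubleton_in_blowup_edges:
  assumes N: "closed_nbhd_system C N" and cls: "cls ` V \<subseteq> C"
  shows "{u, v} \<in> blowup_edges V cls N \<longleftrightarrow> u \<in> V \<and> v \<in> V \<and> u \<noteq> v \<and> cls v \<in> N (cls u)"
proof
  assume "{u, v} \<in> blowup_edges V cls N"
  then obtain p q where pq: "{u, v} = {p, q}" "p \<in> V" "q \<in> V" "p \<noteq> q" "cls q \<in> N (cls p)"
    unfolding blowup_edges_def by blast
  have "cls p \<in> N (cls q)"
    using N cls pq(2,3,5) unfolding closed_nbhd_system_def by blast
  with pq show "u \<in> V \<and> v \<in> V \<and> u \<noteq> v \<and> cls v \<in> N (cls u)"
    by (auto simp: doubleton_eq_iff)
qed (auto simp: blowup_edges_def)

lemma closed_nbhd_blowup_edges: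
  assumes N: "closed_nbhd_system C N" and cls: "cls ` V \<subseteq> C" and u: "u \<in> V"
  shows "closed_nbhd V (blowup_edges V cls N) u = {x \<in> V. cls x \<in> N (cls u)}"
proof -
  have "cls u \<in> C"
    using cls u by blast
  then have "cls u \<in> N (cls u)" and "cls x \<in> N (cls u) \<longleftrightarrow> cls u \<in> N (cls x)" if "cls x \<in> C" for x
    using N that unfolding closed_nbhd_system_def by blast+
  then show ?thesis
    using cls u unfolding closed_nbhd_def doubleton_in_blowup_edges[OF N cls] by auto
qed

lemma card_union_of_classes:
  assumes "finite V" and "finite S"
  shows "card {x \<in> V. cls x \<in> S} = (\<Sum>c\<in>S. class_size V cls c)"
proof -
  have "{x \<in> V. cls x \<in> S} = (\<Union>c\<in>S. {x \<in> V. cls x = c})"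
    by blast
  also have "card \<dots> = (\<Sum>c\<in>S. card {x \<in> V. cls x = c})"
    using assms by (intro card_UN_disjoint) auto
  finally show ?thesis
    unfolding class_size_def .
qed

lemma jaccard_blowup_edges:
  assumes N: "closed_nbhd_system C N" and "finite C" "finite V" and cls: "cls ` V \<subseteq> C"
    and u: "u \<in> V" and v: "v \<in> V"
  shows "jaccard V (blowup_edges V cls N) u v = weighted_jaccard (class_size V cls) N (cls u) (cls v)"
proof -
  let ?E = "blowup_edges V cls N" and ?A = "N (cls u)" and ?B = "N (cls v)"
  have "finite ?A"
    using N cls u \<open>finite C\<close> unfolding closed_nbhd_system_def
    by (meson finite_subset image_subset_iff)
  then have "finite (?A \<inter> ?B)" and "finite (?A \<union> ?B)"
    using N cls v \<open>finite C\<close> unfolding closed_nbhd_system_def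
    by (meson finite_Int finite_Un finite_subset image_subset_iff)+
  moreover have "closed_nbhd V ?E u \<inter> closed_nbhd V ?E v = {x \<in> V. cls x \<in> ?A \<inter> ?B}"
    and "closed_nbhd V ?E u \<union> closed_nbhd V ?E v = {x \<in> V. cls x \<in> ?A \<union> ?B}"
    unfolding closed_nbhd_blowup_edges[OF N cls u] closed_nbhd_blowup_edges[OF N cls v] by blast+
  ultimately show ?thesis
    unfolding jaccard_def weighted_jaccard_def using \<open>finite V\<close> by (simp only: card_union_of_classes)
qed

lemma jaccard_eq_1_if_closed_nbhd_eq:
  assumes "finite V" and "closed_nbhd V E u = closed_nbhd V E v"
  shows "jaccard V E u v = 1"
proof -
  have "finite (closed_nbhd V E u)" and "u \<in> closed_nbhd V E u"
    using \<open>finite V\<close> unfolding closed_nbhd_def by auto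
  then have "card (closed_nbhd V E u) \<noteq> 0"
    by auto
  then show ?thesis
    unfolding jaccard_def assms(2) by simp
qed

text \<open>Vertices in a common class have the same closed neighbourhood, hence Jaccard similarity 1;
  this is why the threshold must satisfy \<open>\<theta> \<le> 1\<close>.\<close>

lemma jaccard_polish_blowup_edges:
  assumes N: "closed_nbhd_system C N" and N': "closed_nbhd_system C N'"
    and C: "finite C" and V: "finite V" and cls: "cls ` V \<subseteq> C" and "\<theta> \<le> 1"
    and separating: "\<And>i j. i \<in> C \<Longrightarrow> j \<in> C \<Longrightarrow> i \<noteq> j \<Longrightarrow>
      \<theta> \<le> weighted_jaccard (class_size V cls) N i j \<longleftrightarrow> j \<in> N' i"
  shows "jaccard_polish \<theta> V (blowup_edges V cls N) = blowup_edges V cls N'"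
proof -
  have "\<theta> \<le> jaccard V (blowup_edges V cls N) u v \<longleftrightarrow> cls v \<in> N' (cls u)"
    if u: "u \<in> V" and v: "v \<in> V" for u v
  proof (cases "cls u = cls v")
    case True
    then have "jaccard V (blowup_edges V cls N) u v = 1"
      using V closed_nbhd_blowup_edges[OF N cls] u v by (simp add: jaccard_eq_1_if_closed_nbhd_eq)
    moreover have "cls v \<in> N' (cls u)"
      using N' cls u True unfolding closed_nbhd_system_def by auto
    ultimately show ?thesis
      using \<open>\<theta> \<le> 1\<close> by simp
  next
    case False
    then show ?thesis
      using separating cls u v jaccard_blowup_edges[OF N C V cls u v] by auto
  qed
  then have "(u \<in> V \<and> v \<in> V \<and> u \<noteq> v \<and> \<theta> \<le> jaccard V (blowup_edges V cls N) u v) \<longleftrightarrow>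
      (u \<in> V \<and> v \<in> V \<and> u \<noteq> v \<and> cls v \<in> N' (cls u))" for u v
    by blast
  then show ?thesis
    unfolding jaccard_polish_def blowup_edges_def by simp
qed

text \<open>Vertex \<open>v\<close> is copy number \<open>v div k\<close> of class \<open>v mod k\<close>.\<close>

definition blowup_vertices :: "nat \<Rightarrow> (nat \<Rightarrow> nat) \<Rightarrow> nat set" where
  "blowup_vertices k w = {v. v div k < w (v mod k)}"

lemma blowup_vertices_class:
  assumes "c < k"
  shows "{v \<in> blowup_vertices k w. v mod k = c} = (\<lambda>i. k * i + c) ` {..<w c}"
proof (intro equalityI subsetI)
  fix v
  assume "v \<in> {v \<in> blowup_vertices k w. v mod k = c}"
  then have "v = k * (v div k) + c" and "v div k < w c"
    by (auto simp: blowup_vertices_def)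
  then show "v \<in> (\<lambda>i. k * i + c) ` {..<w c}"
    by blast
qed (use assms in \<open>auto simp: blowup_vertices_def\<close>)

lemma class_size_blowup_vertices:
  assumes "c < k"
  shows "class_size (blowup_vertices k w) (\<lambda>v. v mod k) c = w c"
proof -
  have "inj_on (\<lambda>i. k * i + c) {..<w c}"
    using assms by (auto intro: inj_onI)
  then show ?thesis
    unfolding class_size_def blowup_vertices_class[OF assms] by (simp add: card_image)
qed

lemma finite_blowup_vertices:
  assumes "0 < k"
  shows "finite (blowup_vertices k w)"
proof -
  have "blowup_vertices k w = (\<Union>c<k. {v \<in> blowup_vertices k w. v mod k = c})"
    using assms by auto
  then show ?thesis
    by (simp add: blowup_vertices_class)
qed

definition pattern_G :: "nat \<Rightarrow> nat set" where
  "pattern_G c = (if c = 0 then {0, 4, 5} else if c = 1 then {1, 2, 6} else if c = 2 then {1, 2, 3, 4, 5}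
     else if c = 3 then {2, 3, 4} else if c = 4 then {0, 2, 3, 4, 6} else if c = 5 then {0, 2, 5}
     else if c = 6 then {1, 4, 6} else {})"

definition pattern_H :: "nat \<Rightarrow> nat set" where
  "pattern_H c = (if c = 0 then {0, 2, 6} else if c = 1 then {1, 4, 5} else if c = 2 then {0, 2, 3, 4, 5}
     else if c = 3 then {2, 3, 4} else if c = 4 then {1, 2, 3, 4, 6} else if c = 5 then {1, 2, 5}
     else if c = 6 then {0, 4, 6} else {})"

definition pattern_weight :: "nat \<Rightarrow> nat \<Rightarrow> nat \<Rightarrow> nat \<Rightarrow> nat" where
  "pattern_weight a b d c =
     (if c = 0 \<or> c = 1 then 1 else if c = 2 \<or> c = 4 then a else if c = 3 then b
      else if c = 5 \<or> c = 6 then d else 0)"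

text \<open>The fractions are the weighted Jaccard similarities of pairs of distinct classes of
  \<open>pattern_G\<close> (equally of \<open>pattern_H\<close>); \<open>0 < \<theta>\<close> accounts for the value 0 of disjoint
  neighbourhoods. Those required to be at least \<open>\<theta>\<close> are exactly the values of pairs that are
  adjacent in the other pattern.\<close>

definition separating_threshold :: "real \<Rightarrow> nat \<Rightarrow> nat \<Rightarrow> nat \<Rightarrow> bool" where
  "separating_threshold \<theta> a b d \<longleftrightarrow> 0 < \<theta> \<and>
     real a / (1 + 2 * real a + real b + real d) < \<theta> \<and>
     (1 + real a) / (1 + 2 * real a + real b + 2 * real d) < \<theta> \<and>
     (1 + real d) / (1 + 2 * real a + real d) < \<theta> \<and>
     \<theta> \<le> (real a + real d) / (2 + 2 * real a + real b + real d) \<and>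
     \<theta> \<le> real a / (2 + real a + 2 * real d) \<and>
     \<theta> \<le> (2 * real a + real b) / (1 + 2 * real a + real b + real d) \<and>
     \<theta> \<le> (2 * real a + real b) / (2 + 2 * real a + real b + 2 * real d)"

lemma all_less_7: "(\<forall>i<(7::nat). P i) \<longleftrightarrow> P 0 \<and> P 1 \<and> P 2 \<and> P 3 \<and> P 4 \<and> P 5 \<and> P 6"
  by (simp add: numeral_eq_Suc All_less_Suc conj_ac)

lemma closed_nbhd_system_pattern_G: "closed_nbhd_system {..<7} pattern_G"
  unfolding closed_nbhd_system_def Ball_def lessThan_iff all_less_7 by (simp add: pattern_G_def)

lemma closed_nbhd_system_pattern_H: "closed_nbhd_system {..<7} pattern_H"
  unfolding closed_nbhd_system_def Ball_def lessThan_iff all_less_7 by (simp add: pattern_H_def)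

lemma threshold_weighted_jaccard_pattern_G_pattern_H:
  assumes "separating_threshold \<theta> a b d"
  shows "\<forall>i<7. \<forall>j<7. i \<noteq> j \<longrightarrow>
           \<theta> \<le> weighted_jaccard (pattern_weight a b d) pattern_G i j \<longleftrightarrow> j \<in> pattern_H i"
    and "\<forall>i<7. \<forall>j<7. i \<noteq> j \<longrightarrow>
           \<theta> \<le> weighted_jaccard (pattern_weight a b d) pattern_H i j \<longleftrightarrow> j \<in> pattern_G i"
  using assms unfolding separating_threshold_def all_less_7
  by (simp_all add: weighted_jaccard_def pattern_G_def pattern_H_def pattern_weight_def
      insert_commute not_le add.assoc)

lemma polish_involution_if_separating_threshold:
  assumes sep: "separating_threshold \<theta> a b d" and "0 < a"
  shows "\<exists>(V :: nat set) E. simple_graph V E \<and>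
           jaccard_polish \<theta> V E \<noteq> E \<and> jaccard_polish \<theta> V (jaccard_polish \<theta> V E) = E"
proof -
  define V where "V = blowup_vertices 7 (pattern_weight a b d)"
  define cls where "cls = (\<lambda>v::nat. v mod 7)"
  have V: "finite V" and cls: "cls ` V \<subseteq> {..<7}"
    unfolding V_def cls_def by (simp_all add: finite_blowup_vertices image_subset_iff)
  have "class_size V cls c = pattern_weight a b d c" for c
  proof (cases "c < 7")
    case False
    then have "{x \<in> V. cls x = c} = {}"
      unfolding cls_def by auto
    with False show ?thesis
      unfolding class_size_def pattern_weight_def by (simp only: card.empty) simp
  qed (simp add: V_def cls_def class_size_blowup_vertices)
  then have sizes: "class_size V cls = pattern_weight a b d"
    by blast
  have "\<theta> \<le> real a / (2 + real a + 2 * real d)"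
    using sep unfolding separating_threshold_def by blast
  also have "\<dots> \<le> 1"
    by simp
  finally have "\<theta> \<le> 1" .
  have GH: "jaccard_polish \<theta> V (blowup_edges V cls pattern_G) = blowup_edges V cls pattern_H"
    by (rule jaccard_polish_blowup_edges[OF closed_nbhd_system_pattern_G closed_nbhd_system_pattern_H
          finite_lessThan V cls \<open>\<theta> \<le> 1\<close>])
      (use threshold_weighted_jaccard_pattern_G_pattern_H(1)[OF sep] in \<open>auto simp: sizes\<close>)
  have HG: "jaccard_polish \<theta> V (blowup_edges V cls pattern_H) = blowup_edges V cls pattern_G"
    by (rule jaccard_polish_blowup_edges[OF closed_nbhd_system_pattern_H closed_nbhd_system_pattern_G
          finite_lessThan V cls \<open>\<theta> \<le> 1\<close>])
      (use threshold_weighted_jaccard_pattern_G_pattern_H(2)[OF sep] in \<open>auto simp: sizes\<close>)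
  have "0 \<in> V" "4 \<in> V" "cls 0 = 0" "cls 4 = 4"
    using \<open>0 < a\<close> by (simp_all add: V_def cls_def blowup_vertices_def pattern_weight_def)
  then have "{0, 4} \<in> blowup_edges V cls pattern_G" and "{0, 4} \<notin> blowup_edges V cls pattern_H"
    by (simp_all add: doubleton_in_blowup_edges[OF closed_nbhd_system_pattern_G cls]
        doubleton_in_blowup_edges[OF closed_nbhd_system_pattern_H cls] pattern_G_def pattern_H_def)
  then show ?thesis
    using simple_graph_blowup_edges[OF V] GH HG by metis
qed

lemma separating_threshold_4_6_2:
  assumes "3/11 < \<theta>" and "\<theta> \<le> 2/7"
  shows "separating_threshold \<theta> 4 6 2"
  using assms unfolding separating_threshold_def by simp

lemma separating_threshold_between_reciprocals:
  fixes n :: nat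
  assumes "4 \<le> n" and "1 / (n + 1) < \<theta>" and "\<theta> \<le> 1 / n"
  shows "separating_threshold \<theta> (3 * n) (3 * n\<^sup>2 - 2 * n - 8) 5"
proof -
  have n: "4 \<le> real n" and sq: "4 * real n \<le> real n * real n"
    and cube: "4 * (real n * real n) \<le> real n * (real n * real n)"
    using assms(1) by (simp_all add: mult_right_mono)
  have "0 < 1 / real (n + 1)"
    by simp
  with assms(2) have "0 < \<theta>"
    by linarith
  have "2 * real n + 8 \<le> 3 * (real n * real n)"
    using n sq by linarith
  then have "real (2 * n + 8) \<le> real (3 * n\<^sup>2)"
    by (simp add: power2_eq_square)
  then have b: "real (3 * n\<^sup>2 - 2 * n - 8) = 3 * (real n * real n) - 2 * real n - 8"
    by (simp only: of_nat_le_iff of_nat_diff) (simp add: power2_eq_square)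
  have above: "\<theta> \<le> x / y" if "0 < y" and "y \<le> n * x" for x y :: real
  proof -
    have "1 / n \<le> x / y"
      using that n by (simp add: field_simps)
    with assms(3) show ?thesis by linarith
  qed
  have below: "x / y < \<theta>" if "0 < y" and "(n + 1) * x \<le> y" for x y :: real
  proof -
    have "x / y \<le> 1 / (n + 1)"
      using that n by (simp add: field_simps)
    with assms(2) show ?thesis by linarith
  qed
  show ?thesis
    unfolding separating_threshold_def b
    by (intro conjI above below; (simp add: algebra_simps)?;
        use \<open>0 < \<theta>\<close> assms(1) n sq cube in linarith)
qed

lemma obtain_reciprocal_bracket:
  fixes \<theta> :: real
  assumes "0 < \<theta>" and "\<theta> \<le> 1/4"
  obtains n :: nat where "4 \<le> n" and "1 / (n + 1) < \<theta>" and "\<theta> \<le> 1 / n"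
proof
  define n where "n = nat \<lfloor>1 / \<theta>\<rfloor>"
  have "4 \<le> 1 / \<theta>"
    using assms by (simp add: field_simps)
  then have floor: "4 \<le> \<lfloor>1 / \<theta>\<rfloor>"
    by (simp add: le_floor_iff)
  have n: "real n = \<lfloor>1 / \<theta>\<rfloor>"
    unfolding n_def by (rule of_nat_nat) (use floor in linarith)
  show "4 \<le> n"
    using floor n by linarith
  have "real n \<le> 1 / \<theta>" and "1 / \<theta> < real n + 1"
    unfolding n by linarith+
  with assms show "1 / (n + 1) < \<theta>" and "\<theta> \<le> 1 / n"
    using \<open>4 \<le> n\<close> by (simp_all add: field_simps)
qed

theorem theorem5:
  fixes \<theta> :: real
  assumes "(0 < \<theta> \<and> \<theta> \<le> 1/4) \<or> (3/11 < \<theta> \<and> \<theta> \<le> 2/7)"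
  shows "\<exists>(V :: nat set) E. simple_graph V E \<and>
           jaccard_polish \<theta> V E \<noteq> E \<and>
           jaccard_polish \<theta> V (jaccard_polish \<theta> V E) = E"
  using assms
proof (elim disjE conjE)
  assume "0 < \<theta>" and "\<theta> \<le> 1/4"
  then obtain n :: nat where "4 \<le> n" "1 / (n + 1) < \<theta>" "\<theta> \<le> 1 / n"
    by (rule obtain_reciprocal_bracket)
  then have "separating_threshold \<theta> (3 * n) (3 * n\<^sup>2 - 2 * n - 8) 5"
    by (rule separating_threshold_between_reciprocals)
  moreover have "0 < 3 * n"
    using \<open>4 \<le> n\<close> by simp
  ultimately show ?thesis
    by (rule polish_involution_if_separating_threshold)
next
  assume "3/11 < \<theta>" and "\<theta> \<le> 2/7"
  then have "separating_threshold \<theta> 4 6 2"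
    by (rule separating_threshold_4_6_2)
  then show ?thesis
    by (rule polish_involution_if_separating_threshold) simp
qed

end
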